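(* Let $C\in\mathbb{R}^{n\times n}$ be symmetric, $\alpha>0$ and $\rho\ge\alpha\|C\|_\infty$, $\rho>0$. Let $(\tilde\sigma^k,\sigma^k,y^k)$ be generated by the ADMM-BM algorithm described in the context, with Assumption A holding. Then $\|\gamma_i^k\|\ge 1-\frac4\alpha-\frac2{\alpha^2}$ for all $i\in[n]$ and all $k\ge2$.
   Context: $\|C\|_\infty=\max_i\sum_j|C_{ij}|$. For $\sigma\in\mathbb{R}^{n\times r}$, $\sigma_i$ is its $i$-th row; $\mathcal{M}=\{\sigma\in\mathbb{R}^{n\times r}:\|\sigma_i\|=1\ \forall i\}$. ADMM-BM with parameter $\rho$: choose $\tilde\sigma^0\in\mathcal{M}$, $\sigma^0=\tilde\sigma^0$, $y^0=C\tilde\sigma^0$. For $k=0,1,\dots$: $\gamma^k=\sigma^k-\frac1\rho(y^k+C\sigma^k)$ with rows $\gamma_i^k$; $\tilde\sigma^{k+1}_i=\gamma_i^k/\|\gamma_i^k\|$; $\sigma^{k+1}=\tilde\sigma^{k+1}+\frac1\rho(y^k-C\tilde\sigma^{k+1})$; $y^{k+1}=y^k+\rho(\tilde\sigma^{k+1}-\sigma^{k+1})$. Assumption A: $\gamma_i^k\neq0$ for all $i,k$ (so the iterates are well defined). *)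

theory Defs
  imports "HOL-Analysis.Analysis"
begin

text \<open>Matrices: C :: real^'n^'n (n x n), sigma, y :: real^'r^'n (n x r); row i of sigma is sigma $ i.\<close>

definition inf_norm :: "real^'n^'m \<Rightarrow> real" where
  "inf_norm C = Max (range (\<lambda>i. \<Sum>j\<in>UNIV. \<bar>C $ i $ j\<bar>))"

definition on_M :: "real^'r^'n \<Rightarrow> bool" where
  "on_M \<sigma> \<longleftrightarrow> (\<forall>i. norm (\<sigma> $ i) = 1)"

definition admm_gamma :: "real^'n^'n \<Rightarrow> real \<Rightarrow> real^'r^'n \<Rightarrow> real^'r^'n \<Rightarrow> real^'r^'n" where
  "admm_gamma C \<rho> \<sigma> y = \<sigma> - (1/\<rho>) *\<^sub>R (y + C ** \<sigma>)"

definition row_normalize :: "real^'r^'n \<Rightarrow> real^'r^'n" where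
  "row_normalize g = (\<chi> i. (1 / norm (g $ i)) *\<^sub>R (g $ i))"

fun admm_bm :: "real^'n^'n \<Rightarrow> real \<Rightarrow> real^'r^'n \<Rightarrow> nat \<Rightarrow> (real^'r^'n) \<times> (real^'r^'n) \<times> (real^'r^'n)" where
  "admm_bm C \<rho> \<sigma>0 0 = (\<sigma>0, \<sigma>0, C ** \<sigma>0)"
| "admm_bm C \<rho> \<sigma>0 (Suc k) =
     (let (st, s, y) = admm_bm C \<rho> \<sigma>0 k;
          st' = row_normalize (admm_gamma C \<rho> s y);
          s' = st' + (1/\<rho>) *\<^sub>R (y - C ** st');
          y' = y + \<rho> *\<^sub>R (st' - s')
      in (st', s', y'))"

definition admm_sigma_t where "admm_sigma_t C \<rho> \<sigma>0 k = fst (admm_bm C \<rho> \<sigma>0 k)"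
definition admm_sigma where "admm_sigma C \<rho> \<sigma>0 k = fst (snd (admm_bm C \<rho> \<sigma>0 k))"
definition admm_y where "admm_y C \<rho> \<sigma>0 k = snd (snd (admm_bm C \<rho> \<sigma>0 k))"

definition admm_gamma_k where
  "admm_gamma_k C \<rho> \<sigma>0 k = admm_gamma C \<rho> (admm_sigma C \<rho> \<sigma>0 k) (admm_y C \<rho> \<sigma>0 k)"

end

theory Submission
  imports Defs
begin

text \<open>
  The multiplier always satisfies \<open>y = C \<sigma>'\<close> for the current normalized iterate \<open>\<sigma>'\<close>.
  Eliminating \<open>\<sigma>\<close> and \<open>y\<close> from one step, with \<open>a = 1/\<rho>\<close> and \<open>p, s\<close> the normalized
  iterates number \<open>k\<close> and \<open>k + 1\<close>, gives
  \<open>\<gamma> = s + a C p - 3 a C s - a\<^sup>2 C (C (p - s))\<close> for step \<open>k + 1\<close>.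
  The rows of \<open>p\<close> and \<open>s\<close> are unit vectors, a row of \<open>C X\<close> has norm at most
  \<open>inf_norm C\<close> times the largest row norm of \<open>X\<close>, and \<open>a inf_norm C \<le> 1/\<alpha>\<close>; so each row of
  \<open>\<gamma>\<close> is a unit vector perturbed by vectors of norms at most \<open>1/\<alpha>\<close>, \<open>3/\<alpha>\<close> and \<open>2/\<alpha>\<^sup>2\<close>.
\<close>

lemma matrix_diff_ldistrib: "A ** (B - C) = A ** B - A ** C"
  for A :: "'a::ring_1^'n^'m"
  by (simp add: vec_eq_iff matrix_matrix_mult_def sum_subtractf algebra_simps)

lemma matrix_scaleR_right: "A ** (c *\<^sub>R B) = c *\<^sub>R (A ** B)"
  for A :: "real^'n^'m"
  by (simp add: matrix_scalar_ac scalar_matrix_assoc)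

lemma matrix_mult_row: "(A ** B) $ i = (\<Sum>j\<in>UNIV. A $ i $ j *\<^sub>R B $ j)"
  for A :: "real^'n^'m" and B :: "real^'r^'n"
  by (simp add: vec_eq_iff matrix_matrix_mult_def sum_component)

lemma row_abs_sum_le_inf_norm: "(\<Sum>j\<in>UNIV. \<bar>A $ i $ j\<bar>) \<le> inf_norm A"
  unfolding inf_norm_def by (rule Max_ge) auto

lemma inf_norm_nonneg: "0 \<le> inf_norm A"
  by (rule order_trans[OF _ row_abs_sum_le_inf_norm]) (auto intro: sum_nonneg)

lemma norm_matrix_mult_row_le:
  fixes A :: "real^'n^'m" and B :: "real^'r^'n"
  assumes "\<And>j. norm (B $ j) \<le> M"
  shows "norm ((A ** B) $ i) \<le> inf_norm A * M"
proof -
  have "0 \<le> M" using assms norm_ge_zero order_trans by blast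
  have "norm ((A ** B) $ i) \<le> (\<Sum>j\<in>UNIV. norm (A $ i $ j *\<^sub>R B $ j))"
    unfolding matrix_mult_row by (rule norm_sum)
  also have "\<dots> \<le> (\<Sum>j\<in>UNIV. \<bar>A $ i $ j\<bar> * M)"
    by (rule sum_mono) (simp add: assms mult_left_mono)
  also have "\<dots> = (\<Sum>j\<in>UNIV. \<bar>A $ i $ j\<bar>) * M"
    by (simp add: sum_distrib_right)
  also have "\<dots> \<le> inf_norm A * M"
    using \<open>0 \<le> M\<close> by (simp add: mult_right_mono row_abs_sum_le_inf_norm)
  finally show ?thesis .
qed

lemma norm_diff_diff_diff_ge:
  fixes u v w z :: "'a::real_normed_vector"
  shows "norm u - norm v - norm w - norm z \<le> norm (u + v - w - z)"
  using norm_triangle_ineq2[of "u + v - w" z] norm_triangle_ineq2[of "u + v" w]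
    norm_triangle_ineq2[of u "- v"] by simp

lemma on_M_row_normalize: "(\<And>i. g $ i \<noteq> 0) \<Longrightarrow> on_M (row_normalize g)"
  by (simp add: on_M_def row_normalize_def)

lemma admm_bm_Suc_eqs:
  "admm_sigma_t C \<rho> \<sigma>0 (Suc k) = row_normalize (admm_gamma_k C \<rho> \<sigma>0 k)"
  "admm_sigma C \<rho> \<sigma>0 (Suc k) = admm_sigma_t C \<rho> \<sigma>0 (Suc k)
     + (1/\<rho>) *\<^sub>R (admm_y C \<rho> \<sigma>0 k - C ** admm_sigma_t C \<rho> \<sigma>0 (Suc k))"
  "admm_y C \<rho> \<sigma>0 (Suc k) = admm_y C \<rho> \<sigma>0 k
     + \<rho> *\<^sub>R (admm_sigma_t C \<rho> \<sigma>0 (Suc k) - admm_sigma C \<rho> \<sigma>0 (Suc k))"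
  by (simp_all add: admm_sigma_t_def admm_sigma_def admm_y_def admm_gamma_k_def Let_def
      split: prod.splits)

lemma admm_y_eq_mult_sigma_t:
  assumes "\<rho> \<noteq> 0"
  shows "admm_y C \<rho> \<sigma>0 k = C ** admm_sigma_t C \<rho> \<sigma>0 k"
proof (cases k)
  case 0
  then show ?thesis by (simp add: admm_y_def admm_sigma_t_def)
next
  case (Suc m)
  show ?thesis
    unfolding Suc admm_bm_Suc_eqs(3) admm_bm_Suc_eqs(2)[of C \<rho> \<sigma>0 m]
    using assms by (simp add: algebra_simps)
qed

lemma on_M_admm_sigma_t:
  assumes "on_M \<sigma>0" and "\<forall>k i. admm_gamma_k C \<rho> \<sigma>0 k $ i \<noteq> 0"
  shows "on_M (admm_sigma_t C \<rho> \<sigma>0 k)"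
proof (cases k)
  case 0
  then show ?thesis using assms(1) by (simp add: admm_sigma_t_def)
next
  case (Suc m)
  then show ?thesis using assms(2) by (simp add: admm_bm_Suc_eqs(1) on_M_row_normalize)
qed

lemma admm_gamma_k_Suc:
  fixes C :: "real^'n^'n" and \<sigma>0 :: "real^'r^'n" and k :: nat
  assumes "\<rho> \<noteq> 0"
  defines "p \<equiv> admm_sigma_t C \<rho> \<sigma>0 k" and "s \<equiv> admm_sigma_t C \<rho> \<sigma>0 (Suc k)"
    and "a \<equiv> 1/\<rho>"
  shows "admm_gamma_k C \<rho> \<sigma>0 (Suc k) =
    s + a *\<^sub>R (C ** p) - (3 * a) *\<^sub>R (C ** s) - (a * a) *\<^sub>R (C ** (C ** (p - s)))"
proof -
  have sigma: "admm_sigma C \<rho> \<sigma>0 (Suc k) = s + a *\<^sub>R (C ** p - C ** s)"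
    using assms by (simp add: admm_bm_Suc_eqs(2) admm_y_eq_mult_sigma_t)
  show ?thesis
    unfolding admm_gamma_k_def admm_gamma_def sigma admm_y_eq_mult_sigma_t[OF assms(1)]
    by (simp add: a_def[symmetric] s_def[symmetric] matrix_add_ldistrib matrix_diff_ldistrib
        matrix_scaleR_right algebra_simps) (simp add: vec_eq_iff algebra_simps)
qed

lemma norm_perturbed_unit_row_ge:
  fixes C :: "real^'n^'n" and p s :: "real^'r^'n"
  assumes "on_M p" and "on_M s" and "0 \<le> a" and "a * inf_norm C \<le> \<epsilon>"
  shows "norm ((s + a *\<^sub>R (C ** p) - (3 * a) *\<^sub>R (C ** s)
      - (a * a) *\<^sub>R (C ** (C ** (p - s)))) $ i) \<ge> 1 - 4 * \<epsilon> - 2 * \<epsilon>\<^sup>2"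
proof -
  let ?N = "inf_norm C"
  have unit: "norm (p $ j) = 1" "norm (s $ j) = 1" for j
    using assms(1,2) by (auto simp: on_M_def)
  have "norm ((C ** p) $ i) \<le> ?N" "norm ((C ** s) $ i) \<le> ?N"
    using norm_matrix_mult_row_le[of p 1 C i] norm_matrix_mult_row_le[of s 1 C i] unit by simp_all
  then have A: "norm (a *\<^sub>R (C ** p) $ i) \<le> \<epsilon>"
    and B: "norm ((3 * a) *\<^sub>R (C ** s) $ i) \<le> 3 * \<epsilon>"
    using mult_left_mono[of _ ?N a] assms(3,4) by fastforce+
  have "norm ((p - s) $ j) \<le> 2" for j
    using norm_triangle_ineq4[of "p $ j" "s $ j"] unit by simp
  then have "norm ((C ** (p - s)) $ j) \<le> ?N * 2" for j
    by (rule norm_matrix_mult_row_le)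
  then have "norm ((C ** (C ** (p - s))) $ i) \<le> ?N * (?N * 2)"
    by (rule norm_matrix_mult_row_le)
  then have "norm ((a * a) *\<^sub>R (C ** (C ** (p - s))) $ i) \<le> 2 * (a * ?N)\<^sup>2"
    using assms(3) by (simp add: mult_left_mono power2_eq_square mult_ac)
  also have "\<dots> \<le> 2 * \<epsilon>\<^sup>2"
    using power_mono[OF assms(4)] assms(3) inf_norm_nonneg[of C] by simp
  finally have D: "norm ((a * a) *\<^sub>R (C ** (C ** (p - s))) $ i) \<le> 2 * \<epsilon>\<^sup>2" .
  have "norm (s $ i) - norm (a *\<^sub>R (C ** p) $ i) - norm ((3 * a) *\<^sub>R (C ** s) $ i)
      - norm ((a * a) *\<^sub>R (C ** (C ** (p - s))) $ i)
      \<le> norm ((s + a *\<^sub>R (C ** p) - (3 * a) *\<^sub>R (C ** s)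
      - (a * a) *\<^sub>R (C ** (C ** (p - s)))) $ i)"
    unfolding vector_add_component vector_minus_component vector_scaleR_component
    by (rule norm_diff_diff_diff_ge)
  then show ?thesis using A B D unit(2)[of i] by linarith
qed

theorem lemma2:
  fixes C :: "real^'n^'n" and \<sigma>0 :: "real^'r^'n" and \<alpha> \<rho> :: real
  assumes "transpose C = C"
    and "\<alpha> > 0" and "\<rho> \<ge> \<alpha> * inf_norm C" and "\<rho> > 0"
    and "on_M \<sigma>0"
    and "\<forall>k i. admm_gamma_k C \<rho> \<sigma>0 k $ i \<noteq> 0"
  shows "\<forall>k\<ge>2. \<forall>i. norm (admm_gamma_k C \<rho> \<sigma>0 k $ i) \<ge> 1 - 4/\<alpha> - 2/\<alpha>^2"
proof (intro allI impI)
  fix k :: nat and i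
  assume "k \<ge> 2"
  then obtain m where k: "k = Suc m" by (cases k) auto
  have "(1/\<rho>) * inf_norm C \<le> 1/\<alpha>"
    using assms(2-4) by (simp add: field_simps mult.commute)
  then have "norm (admm_gamma_k C \<rho> \<sigma>0 k $ i) \<ge> 1 - 4 * (1/\<alpha>) - 2 * (1/\<alpha>)\<^sup>2"
    unfolding k admm_gamma_k_Suc[OF less_imp_neq[OF assms(4), symmetric]]
    using assms(4-6) by (intro norm_perturbed_unit_row_ge on_M_admm_sigma_t) auto
  then show "norm (admm_gamma_k C \<rho> \<sigma>0 k $ i) \<ge> 1 - 4/\<alpha> - 2/\<alpha>^2"
    by (simp add: power_divide)
qed

end
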